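(* Let $C=\begin{pmatrix}0&1\\-1&0\end{pmatrix}$, $D=\begin{pmatrix}0&1\\-1&1\end{pmatrix}$ and $\Gamma_3=\langle C,D\rangle\subset\mathrm{PSL}_2\mathbb{R}$ (the $(2,3,\infty)$-triangle group, i.e. the modular group, with $\Gamma_3\cong\langle C,D\mid C^2=D^3=1\rangle$). If $X,Y\in\Gamma_3$ satisfy $\Gamma_3=\langle X,Y\rangle$ and $\mathrm{tr}\,X=\mathrm{tr}\,Y$, then $X$ and $Y$ are parabolic.
   Context: Traces are of lifts to $\mathrm{SL}_2\mathbb{R}$; "$\mathrm{tr}\,X=\mathrm{tr}\,Y$" means the elements admit lifts of equal trace. Parabolic means non-identity with $\mathrm{tr}^2=4$. *)

theory Defs
  imports "HOL-Analysis.Analysis"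
begin

text \<open>Elements of SL(2,R) are represented as real 2x2 matrices of determinant 1;
  an element of PSL(2,R) is represented by either of its two lifts A, -A.\<close>

type_synonym mat2 = "real^2^2"

inductive_set gen_subgroup :: "mat2 set \<Rightarrow> mat2 set" for S where
  gen_one: "mat 1 \<in> gen_subgroup S"
| gen_elem: "s \<in> S \<Longrightarrow> s \<in> gen_subgroup S"
| gen_inv: "s \<in> S \<Longrightarrow> matrix_inv s \<in> gen_subgroup S"
| gen_mult: "a \<in> gen_subgroup S \<Longrightarrow> b \<in> gen_subgroup S \<Longrightarrow> a ** b \<in> gen_subgroup S"

text \<open>Preimage in SL(2,R) of the subgroup of PSL(2,R) generated by the images of S:
  it is the subgroup generated by S together with -I.\<close>
definition psl_gen :: "mat2 set \<Rightarrow> mat2 set" where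
  "psl_gen S = gen_subgroup (insert (- mat 1) S)"

definition matC :: mat2 where
  "matC = vector [vector [0, 1], vector [-1, 0]]"

definition matD :: mat2 where
  "matD = vector [vector [0, 1], vector [-1, 1]]"

definition Gamma3 :: "mat2 set" where
  "Gamma3 = psl_gen {matC, matD}"

definition parabolic :: "mat2 \<Rightarrow> bool" where
  "parabolic A \<longleftrightarrow> A \<noteq> mat 1 \<and> A \<noteq> - mat 1 \<and> (trace A)\<^sup>2 = 4"

end

theory Submission
  imports Defs
begin

(* All generators C, D, -I of Gamma3 lie in SL(2,Z), so X and Y are
   integral matrices of determinant 1 and their traces x, y and z = tr(XY) are
   integers.  By the Cayley-Hamilton identities for 2x2 matrices, the Z-module
   L = Z<I, X, Y, XY> is stable under left multiplication by X, Y, their inverses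
   and -I; hence it contains psl_gen {X, Y} = Gamma3, in particular the elementary
   matrices E12 = CD + I and E21 = E12 - C.  A direct computation shows that the
   commutator of two elements of L is a multiple [X,Y] N of XY - YX by an integral
   matrix N, whereas E12 E21 - E21 E12 = diag(1,-1) has determinant -1.  Therefore
   det(XY - YX) = 4 - x^2 - y^2 - z^2 + xyz (Fricke) is a unit of Z.  Under
   y = +-x this becomes the Diophantine condition |(z-2)(x^2-z-2)| = 1, which
   forces x^2 = 4 because 2 and 6 are not squares; and det(XY - YX) /= 0 shows
   that neither X nor Y is +-I. *)

definition mk :: "real \<Rightarrow> real \<Rightarrow> real \<Rightarrow> real \<Rightarrow> mat2" where
  "mk a b c d = vector [vector [a, b], vector [c, d]]"

lemma mk_nth [simp]: "mk a b c d $ 1 $ 1 = a" "mk a b c d $ 1 $ 2 = b"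
  "mk a b c d $ 2 $ 1 = c" "mk a b c d $ 2 $ 2 = d"
  by (simp_all add: mk_def)

lemma mat_mk: "(A::mat2) = mk (A$1$1) (A$1$2) (A$2$1) (A$2$2)"
  by (simp add: vec_eq_iff forall_2)

lemma mk_eq [simp]: "mk a b c d = mk a' b' c' d' \<longleftrightarrow> a = a' \<and> b = b' \<and> c = c' \<and> d = d'"
  by (simp add: mk_def vec_eq_iff forall_2)

lemma mk_mult [simp]:
  "mk a b c d ** mk e f g h = mk (a*e+b*g) (a*f+b*h) (c*e+d*g) (c*f+d*h)"
  by (simp add: vec_eq_iff forall_2 matrix_matrix_mult_def sum_2)

lemma mk_add [simp]: "mk a b c d + mk e f g h = mk (a+e) (b+f) (c+g) (d+h)"
  by (simp add: vec_eq_iff forall_2)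

lemma mk_diff [simp]: "mk a b c d - mk e f g h = mk (a-e) (b-f) (c-g) (d-h)"
  by (simp add: vec_eq_iff forall_2)

lemma mk_neg [simp]: "- mk a b c d = mk (-a) (-b) (-c) (-d)"
  by (simp add: vec_eq_iff forall_2)

lemma mk_scale [simp]: "k *\<^sub>R mk a b c d = mk (k*a) (k*b) (k*c) (k*d)"
  by (simp add: vec_eq_iff forall_2)

lemma mat1_mk: "(mat 1 :: mat2) = mk 1 0 0 1"
  by (simp add: vec_eq_iff forall_2 mat_def)

lemma det_mk [simp]: "det (mk a b c d) = a*d - b*c"
  by (simp add: det_2)

lemma trace_mk [simp]: "trace (mk a b c d) = a + d"
  by (simp add: trace_def sum_2)

lemma matC_mk: "matC = mk 0 1 (-1) 0"
  by (simp add: matC_def mk_def)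

lemma matD_mk: "matD = mk 0 1 (-1) 1"
  by (simp add: matD_def mk_def)

lemma matrix_inv_mk:
  assumes "a*d - b*c = 1"
  shows "matrix_inv (mk a b c d) = mk d (-b) (-c) a"
proof -
  have inverse: "mk a b c d ** mk d (-b) (-c) a = mat 1 \<and> mk d (-b) (-c) a ** mk a b c d = mat 1"
    using assms by (simp add: mat1_mk algebra_simps)
  moreover have "B = mk d (-b) (-c) a"
    if "mk a b c d ** B = mat 1 \<and> B ** mk a b c d = mat 1" for B
  proof -
    have "B = B ** (mk a b c d ** mk d (-b) (-c) a)"
      by (simp only: conjunct1[OF inverse] matrix_mul_rid)
    also have "\<dots> = (B ** mk a b c d) ** mk d (-b) (-c) a" by (rule matrix_mul_assoc)
    also have "\<dots> = mk d (-b) (-c) a" by (simp only: conjunct2[OF that] matrix_mul_lid)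
    finally show ?thesis .
  qed
  ultimately show ?thesis unfolding matrix_inv_def by (rule some_equality)
qed

lemma matrix_inv_sl2:
  assumes "det (A::mat2) = 1"
  shows "matrix_inv A = trace A *\<^sub>R mat 1 - A"
proof -
  obtain a b c d where A: "A = mk a b c d" using mat_mk by blast
  show ?thesis using assms unfolding A by (simp add: matrix_inv_mk mat1_mk)
qed

section \<open>The modular group lies in SL(2,Z)\<close>

definition integral_matrix :: "mat2 \<Rightarrow> bool" where
  "integral_matrix M \<longleftrightarrow> (\<forall>i j. M $ i $ j \<in> \<int>)"

lemma integral_matrix_mk:
  "integral_matrix (mk a b c d) \<longleftrightarrow> a \<in> \<int> \<and> b \<in> \<int> \<and> c \<in> \<int> \<and> d \<in> \<int>"
  by (simp add: integral_matrix_def forall_2)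

lemma integral_matrix_entries:
  assumes "integral_matrix M"
  shows "M$1$1 \<in> \<int>" "M$1$2 \<in> \<int>" "M$2$1 \<in> \<int>" "M$2$2 \<in> \<int>"
  using assms by (simp_all add: integral_matrix_def)

lemma integral_matrix_mult:
  assumes "integral_matrix A" "integral_matrix B"
  shows "integral_matrix (A ** B)"
  using assms by (subst (1 2 3) mat_mk) (simp add: integral_matrix_mk integral_matrix_entries)

lemma integral_matrix_diff:
  assumes "integral_matrix A" "integral_matrix B"
  shows "integral_matrix (A - B)"
  using assms by (simp add: integral_matrix_def)

lemma integral_matrix_det: "integral_matrix M \<Longrightarrow> det M \<in> \<int>"
  by (subst mat_mk) (simp add: integral_matrix_entries)

lemma integral_matrix_trace: "integral_matrix M \<Longrightarrow> trace M \<in> \<int>"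
  by (subst mat_mk) (simp add: integral_matrix_entries)

definition SL2Z :: "mat2 set" where
  "SL2Z = {M. integral_matrix M \<and> det M = 1}"

lemma SL2Z_mult: "A \<in> SL2Z \<Longrightarrow> B \<in> SL2Z \<Longrightarrow> A ** B \<in> SL2Z"
  by (simp add: SL2Z_def integral_matrix_mult det_mul)

lemma SL2Z_inv:
  assumes "A \<in> SL2Z"
  shows "matrix_inv A \<in> SL2Z"
proof -
  obtain a b c d where A: "A = mk a b c d" using mat_mk by blast
  show ?thesis using assms
    unfolding A SL2Z_def by (simp add: matrix_inv_mk integral_matrix_mk algebra_simps)
qed

lemma gen_subgroup_mult_stable:
  assumes gen: "\<And>s N. s \<in> S \<Longrightarrow> N \<in> L \<Longrightarrow> s ** N \<in> L"
    and gen_inverse: "\<And>s N. s \<in> S \<Longrightarrow> N \<in> L \<Longrightarrow> matrix_inv s ** N \<in> L"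
    and "M \<in> gen_subgroup S" "N \<in> L"
  shows "M ** N \<in> L"
  using assms(3,4)
proof (induction arbitrary: N rule: gen_subgroup.induct)
  case gen_one
  then show ?case by simp
next
  case (gen_elem s)
  then show ?case by (rule gen)
next
  case (gen_inv s)
  then show ?case by (rule gen_inverse)
next
  case (gen_mult A B)
  then show ?case by (simp flip: matrix_mul_assoc)
qed

lemma Gamma3_SL2Z: "Gamma3 \<subseteq> SL2Z"
proof
  fix M assume "M \<in> Gamma3"
  then have M: "M \<in> gen_subgroup {- mat 1, matC, matD}"
    unfolding Gamma3_def psl_gen_def .
  have generators: "s \<in> SL2Z" if "s \<in> {- mat 1, matC, matD}" for s
    using that by (auto simp: SL2Z_def mat1_mk matC_mk matD_mk integral_matrix_mk)
  have one: "mat 1 \<in> SL2Z" by (simp add: SL2Z_def mat1_mk integral_matrix_mk)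
  have "M ** mat 1 \<in> SL2Z"
  proof (rule gen_subgroup_mult_stable[OF _ _ M one])
    fix s N assume "s \<in> {- mat 1, matC, matD}" "N \<in> SL2Z"
    then show "s ** N \<in> SL2Z" "matrix_inv s ** N \<in> SL2Z"
      using generators SL2Z_mult SL2Z_inv by blast+
  qed
  then show "M \<in> SL2Z" by simp
qed

section \<open>The trace lattice of a pair of matrices\<close>

definition trace_lattice :: "mat2 \<Rightarrow> mat2 \<Rightarrow> mat2 set" where
  "trace_lattice X Y = {p *\<^sub>R mat 1 + q *\<^sub>R X + r *\<^sub>R Y + s *\<^sub>R (X ** Y) | p q r s.
      p \<in> \<int> \<and> q \<in> \<int> \<and> r \<in> \<int> \<and> s \<in> \<int>}"

lemma trace_lattice_intro:
  assumes "p \<in> \<int>" "q \<in> \<int>" "r \<in> \<int>" "s \<in> \<int>"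
    and "M = p *\<^sub>R mat 1 + q *\<^sub>R X + r *\<^sub>R Y + s *\<^sub>R (X ** Y)"
  shows "M \<in> trace_lattice X Y"
  unfolding trace_lattice_def using assms by blast

lemma mat1_in_trace_lattice: "mat 1 \<in> trace_lattice X Y"
  by (rule trace_lattice_intro[of 1 0 0 0]) auto

lemma trace_lattice_lincomb:
  assumes "M \<in> trace_lattice X Y" "M' \<in> trace_lattice X Y" "k \<in> \<int>" "k' \<in> \<int>"
  shows "k *\<^sub>R M + k' *\<^sub>R M' \<in> trace_lattice X Y"
proof -
  obtain p q r s where M: "p\<in>\<int>" "q\<in>\<int>" "r\<in>\<int>" "s\<in>\<int>"
    "M = p *\<^sub>R mat 1 + q *\<^sub>R X + r *\<^sub>R Y + s *\<^sub>R (X ** Y)"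
    using assms(1) unfolding trace_lattice_def by blast
  obtain p2 q2 r2 s2 where M': "p2\<in>\<int>" "q2\<in>\<int>" "r2\<in>\<int>" "s2\<in>\<int>"
    "M' = p2 *\<^sub>R mat 1 + q2 *\<^sub>R X + r2 *\<^sub>R Y + s2 *\<^sub>R (X ** Y)"
    using assms(2) unfolding trace_lattice_def by blast
  have combination: "k *\<^sub>R M + k' *\<^sub>R M' = (k * p + k' * p2) *\<^sub>R mat 1 + (k * q + k' * q2) *\<^sub>R X
      + (k * r + k' * r2) *\<^sub>R Y + (k * s + k' * s2) *\<^sub>R (X ** Y)"
    unfolding M(5) M'(5) by (simp add: scaleR_add_right scaleR_add_left add_ac)
  show ?thesis
    by (rule trace_lattice_intro[OF _ _ _ _ combination]) (use M M' assms(3,4) in simp_all)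
qed

text \<open>Stability under X uses \<open>X\<^sup>2 = tr X \<cdot> X - I\<close>.\<close>
lemma trace_lattice_mult_left:
  assumes "det X = 1" "trace X \<in> \<int>" "M \<in> trace_lattice X Y"
  shows "X ** M \<in> trace_lattice X Y"
proof -
  obtain p q r s where M: "p\<in>\<int>" "q\<in>\<int>" "r\<in>\<int>" "s\<in>\<int>"
    "M = p *\<^sub>R mat 1 + q *\<^sub>R X + r *\<^sub>R Y + s *\<^sub>R (X ** Y)"
    using assms(3) unfolding trace_lattice_def by blast
  obtain a b c d where X: "X = mk a b c d" using mat_mk by blast
  obtain e f g h where Y: "Y = mk e f g h" using mat_mk by blast
  let ?x = "trace X"
  have "X ** M = (-q) *\<^sub>R mat 1 + (p + q*?x) *\<^sub>R X + (-s) *\<^sub>R Y + (r + s*?x) *\<^sub>R (X ** Y)"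
    using assms(1) unfolding M(5) X Y mat1_mk
    by (simp only: mk_mult mk_add mk_scale mk_eq trace_mk det_mk) algebra
  then show ?thesis
    using M assms(2) by (intro trace_lattice_intro[of "-q" "p + q*?x" "-s" "r + s*?x"]) auto
qed

text \<open>Stability under Y uses in addition the polarised identity
  \<open>YX = (z - xy) I + y X + x Y - XY\<close>, where \<open>z = tr(XY)\<close>.\<close>
lemma trace_lattice_mult_right:
  assumes "det X = 1" "det Y = 1" "trace X \<in> \<int>" "trace Y \<in> \<int>" "trace (X ** Y) \<in> \<int>"
    and "M \<in> trace_lattice X Y"
  shows "Y ** M \<in> trace_lattice X Y"
proof -
  obtain p q r s where M: "p\<in>\<int>" "q\<in>\<int>" "r\<in>\<int>" "s\<in>\<int>"
    "M = p *\<^sub>R mat 1 + q *\<^sub>R X + r *\<^sub>R Y + s *\<^sub>R (X ** Y)"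
    using assms(6) unfolding trace_lattice_def by blast
  obtain a b c d where X: "X = mk a b c d" using mat_mk by blast
  obtain e f g h where Y: "Y = mk e f g h" using mat_mk by blast
  let ?x = "trace X" and ?y = "trace Y" and ?z = "trace (X ** Y)"
  have "Y ** M = (q*(?z - ?x*?y) - r - s*?x) *\<^sub>R mat 1 + (q*?y + s) *\<^sub>R X
      + (p + q*?x + r*?y + s*?z) *\<^sub>R Y + (-q) *\<^sub>R (X ** Y)"
    using assms(1,2) unfolding M(5) X Y mat1_mk
    by (simp only: mk_mult mk_add mk_scale mk_eq trace_mk det_mk) algebra
  then show ?thesis
    using M assms(3-5)
    by (intro trace_lattice_intro[of "q*(?z - ?x*?y) - r - s*?x" "q*?y + s"
          "p + q*?x + r*?y + s*?z" "-q"]) auto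
qed

text \<open>An element of SL(2) with integral trace that preserves the lattice also has
  an inverse preserving it, since \<open>A\<^sup>-\<^sup>1 = tr A \<cdot> I - A\<close>.\<close>
lemma trace_lattice_mult_inverse:
  assumes "det A = 1" "trace A \<in> \<int>" "M \<in> trace_lattice X Y"
    and "A ** M \<in> trace_lattice X Y"
  shows "matrix_inv A ** M \<in> trace_lattice X Y"
proof -
  obtain a b c d where A: "A = mk a b c d" using mat_mk by blast
  have "matrix_inv A ** M = trace A *\<^sub>R M + (-1) *\<^sub>R (A ** M)"
    unfolding matrix_inv_sl2[OF assms(1)] unfolding A mat1_mk
    by (subst (1 2 3) mat_mk[of M]) (simp add: algebra_simps)
  then show ?thesis using trace_lattice_lincomb[OF assms(3,4,2), of "-1"] by simp
qed

lemma trace_lattice_mult_minus_one: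
  assumes "M \<in> trace_lattice X Y"
  shows "(- mat 1) ** M \<in> trace_lattice X Y"
proof -
  have "(- mat 1) ** M = (-1) *\<^sub>R M + 0 *\<^sub>R M"
    unfolding mat1_mk by (subst (1 2 3) mat_mk[of M]) simp
  then show ?thesis using trace_lattice_lincomb[OF assms assms, of "-1" 0] by simp
qed

lemma psl_gen_subset_trace_lattice:
  assumes "det X = 1" "det Y = 1" "trace X \<in> \<int>" "trace Y \<in> \<int>" "trace (X ** Y) \<in> \<int>"
  shows "psl_gen {X, Y} \<subseteq> trace_lattice X Y"
proof
  fix M assume "M \<in> psl_gen {X, Y}"
  then have M: "M \<in> gen_subgroup {- mat 1, X, Y}" unfolding psl_gen_def .
  have gen: "s ** N \<in> trace_lattice X Y"
    if "s \<in> {- mat 1, X, Y}" "N \<in> trace_lattice X Y" for s N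
    using that trace_lattice_mult_minus_one trace_lattice_mult_left[OF assms(1,3)]
      trace_lattice_mult_right[OF assms] by auto
  have inv_minus_one: "matrix_inv (- mat 1 :: mat2) = - mat 1"
    by (simp add: mat1_mk matrix_inv_mk)
  have gen_inverse: "matrix_inv s ** N \<in> trace_lattice X Y"
    if "s \<in> {- mat 1, X, Y}" "N \<in> trace_lattice X Y" for s N
  proof -
    from that(1) consider "s = - mat 1" | "s = X" | "s = Y" by blast
    then show ?thesis
    proof cases
      case 1
      then show ?thesis using inv_minus_one trace_lattice_mult_minus_one[OF that(2)] by simp
    next
      case 2
      then show ?thesis
        using trace_lattice_mult_inverse[OF assms(1,3) that(2)] gen[OF _ that(2)] by simp
    next
      case 3
      then show ?thesis
        using trace_lattice_mult_inverse[OF assms(2,4) that(2)] gen[OF _ that(2)] by simp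
    qed
  qed
  have "M ** mat 1 \<in> trace_lattice X Y"
    using gen_subgroup_mult_stable[OF gen gen_inverse M mat1_in_trace_lattice] .
  then show "M \<in> trace_lattice X Y" by simp
qed

text \<open>Commutators of lattice elements are divisible by \<open>XY - YX\<close>: for integral X, Y
  the quotient \<open>u I + v adj(X) + w Y\<close> is again integral.\<close>
lemma trace_lattice_commutator:
  assumes "integral_matrix X" "integral_matrix Y"
    and "M \<in> trace_lattice X Y" "M' \<in> trace_lattice X Y"
  shows "\<exists>N. integral_matrix N \<and> M ** M' - M' ** M = (X ** Y - Y ** X) ** N"
proof -
  obtain p q r s where M: "p\<in>\<int>" "q\<in>\<int>" "r\<in>\<int>" "s\<in>\<int>"
    "M = p *\<^sub>R mat 1 + q *\<^sub>R X + r *\<^sub>R Y + s *\<^sub>R (X ** Y)"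
    using assms(3) unfolding trace_lattice_def by blast
  obtain p2 q2 r2 s2 where M': "p2\<in>\<int>" "q2\<in>\<int>" "r2\<in>\<int>" "s2\<in>\<int>"
    "M' = p2 *\<^sub>R mat 1 + q2 *\<^sub>R X + r2 *\<^sub>R Y + s2 *\<^sub>R (X ** Y)"
    using assms(4) unfolding trace_lattice_def by blast
  obtain a b c d where X: "X = mk a b c d" using mat_mk by blast
  obtain e f g h where Y: "Y = mk e f g h" using mat_mk by blast
  define N where "N = (q * r2 - r * q2) *\<^sub>R mat 1 + (q * s2 - s * q2) *\<^sub>R mk d (-b) (-c) a
      + (s * r2 - r * s2) *\<^sub>R Y"
  have "M ** M' - M' ** M = (X ** Y - Y ** X) ** N"
    unfolding M(5) M'(5) N_def X Y mat1_mk
    by (simp only: mk_mult mk_add mk_diff mk_scale mk_eq) algebra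
  moreover have "integral_matrix N"
    using assms(1,2) M M' unfolding N_def X Y mat1_mk by (simp add: integral_matrix_mk)
  ultimately show ?thesis by blast
qed

section \<open>The commutator of a generating pair\<close>

lemma det_commutator_fricke:
  fixes X Y :: mat2
  assumes "det X = 1" "det Y = 1"
  shows "det (X ** Y - Y ** X) = 4 - (trace X)\<^sup>2 - (trace Y)\<^sup>2 - (trace (X ** Y))\<^sup>2
      + trace X * trace Y * trace (X ** Y)"
proof -
  obtain a b c d where X: "X = mk a b c d" using mat_mk by blast
  obtain e f g h where Y: "Y = mk e f g h" using mat_mk by blast
  show ?thesis
    using assms unfolding X Y by (simp only: mk_mult mk_diff det_mk trace_mk) algebra
qed

lemma Ints_abs_mult_eq_1:
  fixes a b :: real
  assumes "a \<in> \<int>" "b \<in> \<int>" "\<bar>a * b\<bar> = 1"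
  shows "\<bar>a\<bar> = 1"
proof -
  obtain i j where ij: "a = of_int i" "b = of_int j" using assms(1,2) by (auto elim!: Ints_cases)
  have "of_int \<bar>i * j\<bar> = (1::real)" using assms(3) unfolding ij by simp
  then have "\<bar>i * j\<bar> = 1" by (simp only: of_int_eq_1_iff)
  then show ?thesis using ij(1) abs_zmult_eq_1 by fastforce
qed

text \<open>If X and Y generate Gamma3, the commutator \<open>XY - YX\<close> is unimodular: the
  elementary matrices \<open>E12 = CD + I\<close>, \<open>E21 = E12 - C\<close> lie in the trace lattice and
  their commutator \<open>diag(1,-1)\<close> has determinant -1.\<close>
lemma generating_pair_commutator_unimodular:
  assumes "X \<in> Gamma3" "Y \<in> Gamma3" "psl_gen {X, Y} = Gamma3"
  shows "\<bar>det (X ** Y - Y ** X)\<bar> = 1"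
proof -
  have X: "integral_matrix X" "det X = 1" and Y: "integral_matrix Y" "det Y = 1"
    using assms(1,2) Gamma3_SL2Z unfolding SL2Z_def by auto
  have Gamma3_lattice: "Gamma3 \<subseteq> trace_lattice X Y"
    using psl_gen_subset_trace_lattice[OF X(2) Y(2)] assms(3) X Y
    by (simp add: integral_matrix_trace integral_matrix_mult)
  have "matC \<in> Gamma3" "matC ** matD \<in> Gamma3"
    unfolding Gamma3_def psl_gen_def by (auto intro: gen_elem gen_mult)
  then have C: "matC \<in> trace_lattice X Y" and CD: "matC ** matD \<in> trace_lattice X Y"
    using Gamma3_lattice by auto
  define E12 where "E12 = matC ** matD + mat 1"
  define E21 where "E21 = E12 - matC"
  have E12: "E12 \<in> trace_lattice X Y"
    using trace_lattice_lincomb[OF CD mat1_in_trace_lattice, of 1 1] unfolding E12_def by simp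
  have E21: "E21 \<in> trace_lattice X Y"
    using trace_lattice_lincomb[OF E12 C, of 1 "-1"] unfolding E21_def by simp
  obtain N where N: "integral_matrix N" "E12 ** E21 - E21 ** E12 = (X ** Y - Y ** X) ** N"
    using trace_lattice_commutator[OF X(1) Y(1) E12 E21] by blast
  have "E12 ** E21 - E21 ** E12 = mk 1 0 0 (-1)"
    unfolding E12_def E21_def by (simp add: matC_mk matD_mk mat1_mk)
  then have "det (X ** Y - Y ** X) * det N = -1"
    using N(2) det_mul[of "X ** Y - Y ** X" N] by simp
  moreover have "det (X ** Y - Y ** X) \<in> \<int>"
    using X Y by (intro integral_matrix_det integral_matrix_diff integral_matrix_mult)
  ultimately show ?thesis
    using Ints_abs_mult_eq_1[OF _ integral_matrix_det[OF N(1)]] by simp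
qed

section \<open>The Diophantine equation\<close>

lemma int_square_ne_2_6:
  fixes i :: int
  shows "i\<^sup>2 \<noteq> 2 \<and> i\<^sup>2 \<noteq> 6"
proof (cases "\<bar>i\<bar> \<le> 2")
  case True
  then have "i = -2 \<or> i = -1 \<or> i = 0 \<or> i = 1 \<or> i = 2" by auto
  then show ?thesis by auto
next
  case False
  then have "3 * 3 \<le> \<bar>i\<bar> * \<bar>i\<bar>" by (intro mult_mono) auto
  then show ?thesis by (simp add: power2_eq_square abs_mult[symmetric])
qed

text \<open>The value of Fricke's expression for \<open>y = x\<close> factors as \<open>(z - 2)(x\<^sup>2 - z - 2)\<close>;
  being a unit, both factors are \<open>\<plusminus>1\<close>, so \<open>x\<^sup>2 \<in> {2, 4, 6}\<close>.\<close>
lemma equal_trace_unit_equation: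
  fixes x z :: real
  assumes "x \<in> \<int>" "z \<in> \<int>" "\<bar>4 - 2 * x\<^sup>2 - z\<^sup>2 + x\<^sup>2 * z\<bar> = 1"
  shows "x\<^sup>2 = 4"
proof -
  have factor: "4 - 2 * x\<^sup>2 - z\<^sup>2 + x\<^sup>2 * z = (z - 2) * (x\<^sup>2 - z - 2)"
    by (simp add: algebra_simps power2_eq_square)
  have integral: "z - 2 \<in> \<int>" "x\<^sup>2 - z - 2 \<in> \<int>" using assms(1,2) by auto
  have unit: "\<bar>(z - 2) * (x\<^sup>2 - z - 2)\<bar> = 1" using assms(3) unfolding factor .
  have "\<bar>z - 2\<bar> = 1" by (rule Ints_abs_mult_eq_1[OF integral unit])
  moreover have "\<bar>x\<^sup>2 - z - 2\<bar> = 1"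
    by (rule Ints_abs_mult_eq_1[OF integral(2,1)]) (use unit in \<open>simp add: mult.commute\<close>)
  ultimately have "x\<^sup>2 = 2 \<or> x\<^sup>2 = 4 \<or> x\<^sup>2 = 6" by linarith
  moreover obtain i where "x = of_int i" using assms(1) Ints_cases by blast
  ultimately have "i\<^sup>2 = 2 \<or> i\<^sup>2 = 4 \<or> i\<^sup>2 = 6"
    by (simp flip: of_int_power add: of_int_eq_numeral_iff)
  then have "i\<^sup>2 = 4" using int_square_ne_2_6[of i] by auto
  then show ?thesis using \<open>x = of_int i\<close> by (simp flip: of_int_power)
qed

lemma noncommuting_not_central:
  fixes X Y :: mat2
  assumes "X ** Y \<noteq> Y ** X"
  shows "X \<noteq> mat 1 \<and> X \<noteq> - mat 1"
proof -
  obtain e f g h where Y: "Y = mk e f g h" using mat_mk by blast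
  show ?thesis using assms unfolding Y mat1_mk by auto
qed

theorem mainTheorem10:
  fixes X Y :: mat2
  assumes "X \<in> Gamma3" and "Y \<in> Gamma3"
    and "psl_gen {X, Y} = Gamma3"
    and "trace X = trace Y \<or> trace X = - trace Y"
  shows "parabolic X \<and> parabolic Y"
proof -
  have X: "integral_matrix X" "det X = 1" and Y: "integral_matrix Y" "det Y = 1"
    using assms(1,2) Gamma3_SL2Z unfolding SL2Z_def by auto
  define x y z where "x = trace X" and "y = trace Y" and "z = trace (X ** Y)"
  have integral: "x \<in> \<int>" "z \<in> \<int>"
    unfolding x_def z_def using X Y by (simp_all add: integral_matrix_trace integral_matrix_mult)
  have unit: "\<bar>4 - x\<^sup>2 - y\<^sup>2 - z\<^sup>2 + x * y * z\<bar> = 1"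
    using generating_pair_commutator_unimodular[OF assms(1-3)] det_commutator_fricke[OF X(2) Y(2)]
    unfolding x_def y_def z_def by simp
  have "x\<^sup>2 = 4"
  proof (cases "y = x")
    case True
    with unit show ?thesis by (intro equal_trace_unit_equation[OF integral]) (simp add: power2_eq_square)
  next
    case False
    then have "y = - x" using assms(4) unfolding x_def y_def by auto
    with unit show ?thesis
      by (intro equal_trace_unit_equation[of x "- z"]) (use integral in \<open>simp_all add: power2_eq_square\<close>)
  qed
  moreover have "y\<^sup>2 = x\<^sup>2" using assms(4) unfolding x_def y_def by auto
  moreover have "X ** Y \<noteq> Y ** X"
  proof
    assume "X ** Y = Y ** X"
    moreover have "det (0::mat2) = 0" by (subst mat_mk) simp
    ultimately show False using generating_pair_commutator_unimodular[OF assms(1-3)] by simp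
  qed
  ultimately show ?thesis
    using noncommuting_not_central[of X Y] noncommuting_not_central[of Y X]
    unfolding parabolic_def x_def y_def by auto
qed

end
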